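(* Let $n \ge 2$, let $\triangle$ be an $n$-dimensional simplex in $\mathbb{R}^n$, and let $K$ be a compact convex subset of $\mathbb{R}^n$ such that: (i) for every unit vector $u \in \mathbb{R}^n$, the projection $\triangle_u$ contains a translate of $K_u$; (ii) $\triangle$ does not contain any translate of $K$. Then there exists $t \in (0,1)$ such that the convex body $L = (1-t)K + t\triangle$ satisfies: (i') for every unit vector $u$, the projection $\triangle_u$ contains a translate of $L_u$; (ii') $V_n(L) > V_n(\triangle)$.
   Context: For a set $S \subseteq \mathbb{R}^n$ and a unit vector $u$, $S_u$ denotes the orthogonal projection of $S$ onto the hyperplane $u^\perp$. "$A$ contains a translate of $B$" means $B + w \subseteq A$ for some vector $w$. For $a,b \ge 0$, $aK + bL = \{ax + by : x \in K, y \in L\}$ (Minkowski combination). $V_n$ denotes $n$-dimensional Lebesgue volume. *)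

theory Defs
  imports "HOL-Analysis.Analysis"
begin

definition proj_perp :: "'a::euclidean_space \<Rightarrow> 'a set \<Rightarrow> 'a set" where
  "proj_perp u S = (\<lambda>x. x - (x \<bullet> u) *\<^sub>R u) ` S"

definition contains_translate :: "'a::real_vector set \<Rightarrow> 'a set \<Rightarrow> bool" where
  "contains_translate A B \<longleftrightarrow> (\<exists>w. (\<lambda>x. x + w) ` B \<subseteq> A)"

definition mink_comb :: "real \<Rightarrow> 'a::real_vector set \<Rightarrow> real \<Rightarrow> 'a set \<Rightarrow> 'a set" where
  "mink_comb a K b L = {a *\<^sub>R x + b *\<^sub>R y | x y. x \<in> K \<and> y \<in> L}"

end

theory Submission
  imports Defs
begin

(* Proof strategy.
   Write T = conv C for the vertex set C of the simplex and s = 1 - t, so that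
   L = s K + (1 - s) T.

   Projections: projecting along u is linear, so it commutes with Minkowski
   combinations, and a convex set A containing a translate of B also contains a
   translate of (1 - t) B + t A.  Hence (i') follows from (i) for every t in [0,1].

   Volume: in barycentric coordinates with respect to C, K fits into a translate of T
   iff the minima m_v over K of the coordinates sum to a nonnegative number, so by (ii)
   this sum is negative.  Let p_v in K attain m_v.  L contains the n+1 homothets
   s p_v + (1 - s) T; each of them contains a "cap" in which only the v-th coordinate
   bound is relaxed, and distinct caps overlap only in a common core simplex.  Adding
   the volumes of the caps gives vol L >= vol T * g(s) with g(0) = 1 and
   g'(0) = -n * sum_v m_v > 0, so vol L > vol T for all small s > 0. *)

lemma mink_comb_linear_image:
  assumes "linear f"
  shows "f ` mink_comb a K b L = mink_comb a (f ` K) b (f ` L)"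
  unfolding mink_comb_def by (force simp: linear_add[OF assms] linear_scale[OF assms])

lemma linear_proj_perp: "linear (\<lambda>x. x - (x \<bullet> u) *\<^sub>R u)"
  by (intro linear_compose_sub linearI) (auto simp: inner_simps algebra_simps)

lemma proj_perp_mink_comb:
  "proj_perp u (mink_comb a K b L) = mink_comb a (proj_perp u K) b (proj_perp u L)"
  unfolding proj_perp_def by (rule mink_comb_linear_image[OF linear_proj_perp])

lemma convex_proj_perp: "convex S \<Longrightarrow> convex (proj_perp u S)"
  unfolding proj_perp_def by (rule convex_linear_image[OF linear_proj_perp])

lemma contains_translate_mink_comb:
  assumes "convex A" "contains_translate A B" "0 \<le> t" "t \<le> 1"
  shows "contains_translate A (mink_comb (1 - t) B t A)"
proof -
  obtain w where w: "(\<lambda>x. x + w) ` B \<subseteq> A"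
    using assms(2) unfolding contains_translate_def by blast
  have "z + (1 - t) *\<^sub>R w \<in> A" if z_in: "z \<in> mink_comb (1 - t) B t A" for z
  proof -
    obtain x y where "x \<in> B" "y \<in> A" and z: "z = (1 - t) *\<^sub>R x + t *\<^sub>R y"
      using z_in unfolding mink_comb_def by blast
    then have "x + w \<in> A" "y \<in> A" using w by auto
    then have "(1 - t) *\<^sub>R (x + w) + t *\<^sub>R y \<in> A"
      using convexD[OF assms(1)] assms(3,4) by simp
    then show ?thesis by (simp add: z algebra_simps)
  qed
  then show ?thesis unfolding contains_translate_def by blast
qed

lemma compact_mink_comb:
  fixes K L :: "'a::real_normed_vector set"
  assumes "compact K" "compact L"
  shows "compact (mink_comb a K b L)"
proof -
  have "mink_comb a K b L = (\<lambda>p. a *\<^sub>R fst p + b *\<^sub>R snd p) ` (K \<times> L)"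
    unfolding mink_comb_def by force
  also have "compact \<dots>"
    by (intro compact_continuous_image compact_Times assms continuous_intros)
  finally show ?thesis .
qed

lemma measure_union_with_common_core:
  fixes M :: "'a measure" and D :: "'i \<Rightarrow> 'a set"
  assumes fin: "finite I" and ne: "I \<noteq> {}"
    and Cm: "C \<in> fmeasurable M" and Dm: "\<And>i. i \<in> I \<Longrightarrow> D i \<in> fmeasurable M"
    and core: "\<And>i. i \<in> I \<Longrightarrow> C \<subseteq> D i"
    and overlap: "\<And>i j. i \<in> I \<Longrightarrow> j \<in> I \<Longrightarrow> i \<noteq> j \<Longrightarrow> D i \<inter> D j \<subseteq> C"
  shows "measure M (\<Union>i\<in>I. D i) =
         measure M C + (\<Sum>i\<in>I. measure M (D i) - measure M C)"
proof -
  have split: "(\<Union>i\<in>I. D i) = C \<union> (\<Union>i\<in>I. D i - C)" using ne core by blast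
  have Em: "D i - C \<in> fmeasurable M" if "i \<in> I" for i using Dm[OF that] Cm by (rule fmeasurable.Diff)
  have Um: "(\<Union>i\<in>I. D i - C) \<in> fmeasurable M" using fin Em by (intro fmeasurable.finite_UN) auto
  have "measure M (\<Union>i\<in>I. D i) = measure M C + measure M (\<Union>i\<in>I. D i - C)"
    unfolding split using Cm Um by (intro measure_Union) (auto simp: fmeasurable_def)
  also have "measure M (\<Union>i\<in>I. D i - C) = (\<Sum>i\<in>I. measure M (D i - C))"
    using Em overlap fmeasurableD2[OF Em] by (intro measure_finite_Union[OF fin])
      (auto simp: fmeasurable_def disjoint_family_on_def)
  also have "\<dots> = (\<Sum>i\<in>I. measure M (D i) - measure M C)"
    using Dm Cm core by (intro sum.cong refl measurable_measure_Diff) (auto simp: fmeasurableD)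
  finally show ?thesis .
qed

(* The volume ratio of the union of caps built below, as a function of the scaling s:
   a core simplex of relative size 1 - s P and caps enlarged by s d i. *)
definition caps_ratio :: "'i set \<Rightarrow> real \<Rightarrow> ('i \<Rightarrow> real) \<Rightarrow> nat \<Rightarrow> real \<Rightarrow> real" where
  "caps_ratio I P d n s = (1 - s * P) ^ n + (\<Sum>i\<in>I. (1 - s * P + s * d i) ^ n - (1 - s * P) ^ n)"

(* Since the ratio is 1 at s = 0 with derivative n (sum d - P), it exceeds 1 for all
   small s > 0 once P < sum d. *)
lemma caps_ratio_exceeds_one:
  assumes "finite I" "0 < n" "P < sum d I"
  shows "\<exists>\<delta>>0. \<forall>s. 0 < s \<and> s < \<delta> \<longrightarrow> 1 < caps_ratio I P d n s"
proof -
  have "(caps_ratio I P d n has_real_derivative real n * (sum d I - P)) (at 0)"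
    unfolding caps_ratio_def[abs_def]
    by (rule derivative_eq_intros refl | simp add: algebra_simps sum_distrib_left)+
  moreover have "0 < real n * (sum d I - P)" using assms by simp
  ultimately obtain \<delta> where "\<delta> > 0" "\<And>s. 0 < s \<Longrightarrow> s < \<delta> \<Longrightarrow> caps_ratio I P d n 0 < caps_ratio I P d n s"
    using DERIV_pos_inc_right by force
  moreover have "caps_ratio I P d n 0 = 1" by (simp add: caps_ratio_def)
  ultimately show ?thesis by auto
qed

locale affine_frame =
  fixes C :: "'a::euclidean_space set"
  assumes finite_frame: "finite C"
    and independent_frame: "\<not> affine_dependent C"
    and spanning_frame: "affine hull C = UNIV"
begin

definition bary :: "'a \<Rightarrow> 'a \<Rightarrow> real" where
  "bary x = (THE \<mu>. sum \<mu> C = 1 \<and> (\<Sum>v\<in>C. \<mu> v *\<^sub>R v) = x \<and> (\<forall>v. v \<notin> C \<longrightarrow> \<mu> v = 0))"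

lemma affine_coefficients_unique:
  assumes "sum \<mu> C = 1" "(\<Sum>v\<in>C. \<mu> v *\<^sub>R v) = x"
    and "sum \<nu> C = 1" "(\<Sum>v\<in>C. \<nu> v *\<^sub>R v) = x" and "v \<in> C"
  shows "\<mu> v = \<nu> v"
proof (rule ccontr)
  assume ne: "\<mu> v \<noteq> \<nu> v"
  have "sum (\<lambda>w. \<mu> w - \<nu> w) C = 0" "(\<Sum>w\<in>C. (\<mu> w - \<nu> w) *\<^sub>R w) = 0"
    using assms by (simp_all add: sum_subtractf scaleR_diff_left)
  then have "affine_dependent C"
    unfolding affine_dependent_explicit_finite[OF finite_frame]
    using ne \<open>v \<in> C\<close> by (intro exI[of _ "\<lambda>w. \<mu> w - \<nu> w"]) auto
  with independent_frame show False by simp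
qed

lemma bary_spec:
  "sum (bary x) C = 1 \<and> (\<Sum>v\<in>C. bary x v *\<^sub>R v) = x \<and> (\<forall>v. v \<notin> C \<longrightarrow> bary x v = 0)"
proof -
  obtain u where u: "sum u C = 1" "(\<Sum>v\<in>C. u v *\<^sub>R v) = x"
    using affine_hull_finite[OF finite_frame] spanning_frame by auto
  define \<mu> where "\<mu> v = (if v \<in> C then u v else 0)" for v
  have \<mu>: "sum \<mu> C = 1 \<and> (\<Sum>v\<in>C. \<mu> v *\<^sub>R v) = x \<and> (\<forall>v. v \<notin> C \<longrightarrow> \<mu> v = 0)"
    using u by (simp add: \<mu>_def cong: sum.cong)
  show ?thesis unfolding bary_def
  proof (rule theI[where a = \<mu>])
    show "sum \<mu> C = 1 \<and> (\<Sum>v\<in>C. \<mu> v *\<^sub>R v) = x \<and> (\<forall>v. v \<notin> C \<longrightarrow> \<mu> v = 0)"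
      by (fact \<mu>)
    fix \<nu> assume \<nu>: "sum \<nu> C = 1 \<and> (\<Sum>v\<in>C. \<nu> v *\<^sub>R v) = x \<and> (\<forall>v. v \<notin> C \<longrightarrow> \<nu> v = 0)"
    show "\<nu> = \<mu>"
      using affine_coefficients_unique[of \<nu> x \<mu>] \<nu> \<mu> by (metis ext)
  qed
qed

lemma bary_sum: "sum (bary x) C = 1"
  and bary_combination: "(\<Sum>v\<in>C. bary x v *\<^sub>R v) = x"
  using bary_spec by blast+

lemma bary_eqI:
  assumes "sum \<mu> C = 1" "(\<Sum>v\<in>C. \<mu> v *\<^sub>R v) = x" "v \<in> C"
  shows "bary x v = \<mu> v"
  using affine_coefficients_unique[OF bary_sum bary_combination assms(1,2,3)] by simp

lemma bary_affine_shift: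
  assumes "sum a C = 1 - r" "v \<in> C"
  shows "bary (r *\<^sub>R y + (\<Sum>w\<in>C. a w *\<^sub>R w)) v = r * bary y v + a v"
proof (rule bary_eqI[OF _ _ \<open>v \<in> C\<close>])
  show "(\<Sum>w\<in>C. (r * bary y w + a w)) = 1"
    using assms by (simp add: sum.distrib flip: sum_distrib_left) (simp add: bary_sum)
  show "(\<Sum>w\<in>C. (r * bary y w + a w) *\<^sub>R w) = r *\<^sub>R y + (\<Sum>w\<in>C. a w *\<^sub>R w)"
    by (simp add: scaleR_add_left sum.distrib bary_combination flip: scaleR_scaleR scaleR_sum_right)
qed

lemma convex_hull_frame: "convex hull C = {x. \<forall>v\<in>C. 0 \<le> bary x v}"
proof safe
  fix x v assume "x \<in> convex hull C" "v \<in> C"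
  then obtain u where "\<forall>w\<in>C. 0 \<le> u w" "sum u C = 1" "(\<Sum>w\<in>C. u w *\<^sub>R w) = x"
    using convex_hull_finite[OF finite_frame] by auto
  then show "0 \<le> bary x v" using bary_eqI \<open>v \<in> C\<close> by simp
next
  fix x assume "\<forall>v\<in>C. 0 \<le> bary x v"
  then show "x \<in> convex hull C"
    using convex_hull_finite[OF finite_frame] bary_sum bary_combination by blast
qed

(* Each coordinate is an affine, hence continuous, function. *)
lemma continuous_on_bary:
  assumes "v \<in> C" shows "continuous_on S (\<lambda>x. bary x v)"
proof -
  have zero: "(\<Sum>w\<in>C. bary 0 w *\<^sub>R w) = 0" by (rule bary_combination)
  have "linear (\<lambda>x. bary x v - bary 0 v)"
  proof (rule linearI)
    fix x y :: 'a
    have "bary (1 *\<^sub>R x + (\<Sum>w\<in>C. (bary y w - bary 0 w) *\<^sub>R w)) v = bary x v + (bary y v - bary 0 v)"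
      using bary_affine_shift[of "\<lambda>w. bary y w - bary 0 w" 1 v x] assms
      by (simp add: sum_subtractf bary_sum)
    then show "bary (x + y) v - bary 0 v = (bary x v - bary 0 v) + (bary y v - bary 0 v)"
      by (simp add: scaleR_diff_left sum_subtractf bary_combination zero)
  next
    fix c and x :: 'a
    have shift0: "(\<Sum>w\<in>C. ((1 - c) * bary 0 w) *\<^sub>R w) = 0"
      using zero by (simp flip: scaleR_scaleR scaleR_sum_right)
    have "bary (c *\<^sub>R x + (\<Sum>w\<in>C. ((1 - c) * bary 0 w) *\<^sub>R w)) v = c * bary x v + (1 - c) * bary 0 v"
      using bary_affine_shift[of "\<lambda>w. (1 - c) * bary 0 w" c v x] assms
      by (simp add: bary_sum flip: sum_distrib_left)
    then show "bary (c *\<^sub>R x) v - bary 0 v = c *\<^sub>R (bary x v - bary 0 v)"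
      unfolding shift0 by (simp add: algebra_simps)
  qed
  then have "continuous_on S (\<lambda>x. (bary x v - bary 0 v) + bary 0 v)"
    by (intro continuous_on_add linear_continuous_on continuous_on_const) (simp add: linear_linear)
  then show ?thesis by simp
qed

definition bary_region :: "('a \<Rightarrow> real) \<Rightarrow> 'a set" where
  "bary_region a = {x. \<forall>v\<in>C. a v \<le> bary x v}"

lemma bary_region_antimono:
  assumes "\<And>v. v \<in> C \<Longrightarrow> a v \<le> b v"
  shows "bary_region b \<subseteq> bary_region a"
  using assms order_trans unfolding bary_region_def by blast

lemma bary_region_closed: "closed (bary_region a)"
proof -
  have "bary_region a = (\<Inter>v\<in>C. {x. a v \<le> bary x v})"
    unfolding bary_region_def by blast
  also have "closed \<dots>"
    by (intro closed_INT ballI closed_Collect_le continuous_on_const continuous_on_bary)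
  finally show ?thesis .
qed

lemma bary_region_homothetic:
  assumes "sum a C < 1"
  shows "bary_region a = (\<lambda>y. (1 - sum a C) *\<^sub>R y + (\<Sum>v\<in>C. a v *\<^sub>R v)) ` (convex hull C)"
    (is "_ = ?h ` _")
proof safe
  define r where "r = 1 - sum a C"
  have r: "r > 0" using assms by (simp add: r_def)
  fix x assume x: "x \<in> bary_region a"
  define \<mu> where "\<mu> v = (bary x v - a v) / r" for v
  have "sum \<mu> C = 1"
    using r by (simp add: \<mu>_def r_def bary_sum sum_subtractf flip: sum_divide_distrib)
  moreover have "\<forall>v\<in>C. 0 \<le> \<mu> v" using x r by (auto simp: \<mu>_def bary_region_def)
  ultimately have hull: "(\<Sum>v\<in>C. \<mu> v *\<^sub>R v) \<in> convex hull C"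
    unfolding convex_hull_finite[OF finite_frame] by blast
  have "r *\<^sub>R (\<Sum>v\<in>C. \<mu> v *\<^sub>R v) = (\<Sum>v\<in>C. (bary x v - a v) *\<^sub>R v)"
    using r by (simp add: \<mu>_def scaleR_sum_right)
  then have "x = ?h (\<Sum>v\<in>C. \<mu> v *\<^sub>R v)"
    by (simp add: r_def scaleR_diff_left sum_subtractf bary_combination)
  with hull show "x \<in> ?h ` (convex hull C)" by blast
next
  fix y assume "y \<in> convex hull C"
  then show "?h y \<in> bary_region a"
    using bary_affine_shift[of a "1 - sum a C"] assms
    by (auto simp: bary_region_def convex_hull_frame)
qed

lemma bary_region_compact: "sum a C < 1 \<Longrightarrow> compact (bary_region a)"
  unfolding bary_region_homothetic
  by (intro compact_continuous_image continuous_intros finite_imp_compact_convex_hull finite_frame)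

lemma bary_region_measure:
  assumes "sum a C < 1"
  shows "measure lebesgue (bary_region a) = (1 - sum a C) ^ DIM('a) * measure lebesgue (convex hull C)"
  using assms unfolding bary_region_homothetic[OF assms] measure_lebesgue_affine by simp

lemma bary_region_homothety:
  assumes "0 \<le> s" "s < 1"
  shows "bary_region (\<lambda>v. s * bary k v) = (\<lambda>y. s *\<^sub>R k + (1 - s) *\<^sub>R y) ` (convex hull C)"
proof -
  have "sum (\<lambda>v. s * bary k v) C = s" "(\<Sum>v\<in>C. (s * bary k v) *\<^sub>R v) = s *\<^sub>R k"
    by (simp_all add: bary_sum bary_combination flip: sum_distrib_left scaleR_scaleR scaleR_sum_right)
  then show ?thesis
    using assms by (simp add: bary_region_homothetic add.commute)
qed

(* If every coordinate v is bounded below on K by m v and sum m >= 0, then K fits into a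
   translate of the simplex: translate so that the deficit is shared evenly. *)
lemma contains_translate_by_bary_bounds:
  assumes lower: "\<And>k v. k \<in> K \<Longrightarrow> v \<in> C \<Longrightarrow> m v \<le> bary k v" and nonneg: "0 \<le> sum m C"
  shows "contains_translate (convex hull C) K"
proof -
  define N where "N = real (card C)"
  have "C \<noteq> {}" using spanning_frame by auto
  then have N: "N > 0" using finite_frame by (simp add: N_def card_gt_0_iff)
  define d where "d v = sum m C / N - m v" for v
  have "sum d C = 0" using N by (simp add: d_def sum_subtractf N_def)
  then have shift: "bary (k + (\<Sum>v\<in>C. d v *\<^sub>R v)) v = bary k v + d v" if "v \<in> C" for k v
    using bary_affine_shift[of d 1 v k] that by simp
  have "0 \<le> bary k v + d v" if "k \<in> K" "v \<in> C" for k v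
    using lower[OF that] divide_nonneg_pos[OF nonneg N] by (simp add: d_def)
  then have "k + (\<Sum>v\<in>C. d v *\<^sub>R v) \<in> convex hull C" if "k \<in> K" for k
    using that by (simp add: convex_hull_frame shift)
  then show ?thesis unfolding contains_translate_def by blast
qed

lemma measure_convex_hull_pos: "0 < measure lebesgue (convex hull C)"
proof -
  have "C \<noteq> {}" using spanning_frame by auto
  then have "rel_interior (convex hull C) \<noteq> {}"
    by (simp add: rel_interior_eq_empty)
  moreover have "rel_interior (convex hull C) = interior (convex hull C)"
    using spanning_frame by (simp add: rel_interior_interior affine_hull_convex_hull)
  ultimately have "interior (convex hull C) \<noteq> {}" by simp
  then have "\<not> negligible (convex hull C)"
    by (simp add: negligible_convex_interior)
  moreover have "convex hull C \<in> lmeasurable"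
    by (intro lmeasurable_compact finite_imp_compact_convex_hull finite_frame)
  ultimately show ?thesis
    by (metis measure_nonneg negligible_iff_measure0 order_le_less)
qed

definition max_coord :: "('a \<Rightarrow> 'a) \<Rightarrow> 'a \<Rightarrow> real" where
  "max_coord p v = Max ((\<lambda>l. bary (p l) v) ` C)"

lemma max_coord_ge: "l \<in> C \<Longrightarrow> bary (p l) v \<le> max_coord p v"
  unfolding max_coord_def using finite_frame by (intro Max_ge) auto

lemma sum_max_coord_ge_one: "1 \<le> sum (max_coord p) C"
proof -
  obtain l where "l \<in> C" using spanning_frame by fastforce
  then have "sum (bary (p l)) C \<le> sum (max_coord p) C"
    by (intro sum_mono max_coord_ge)
  then show ?thesis by (simp add: bary_sum)
qed

(* The caps bary_region (b(i := c i)) relax the i-th bound of the core bary_region b;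
   two distinct caps meet inside the core, so their union has the stated volume. *)
lemma measure_union_caps:
  assumes lowered: "\<And>i. i \<in> C \<Longrightarrow> c i \<le> b i" and small: "sum b C < 1"
  defines "\<rho> \<equiv> 1 - sum b C"
  shows "measure lebesgue (\<Union>i\<in>C. bary_region (b(i := c i))) =
         measure lebesgue (convex hull C) *
           (\<rho> ^ DIM('a) + (\<Sum>i\<in>C. (\<rho> + (b i - c i)) ^ DIM('a) - \<rho> ^ DIM('a)))"
proof -
  define V where "V = measure lebesgue (convex hull C)"
  have sum_cap: "sum (b(i := c i)) C = sum b C - (b i - c i)" if "i \<in> C" for i
    using that finite_frame by (simp add: sum.remove[of C i] sum_subtractf)
  have cap_small: "sum (b(i := c i)) C < 1" if "i \<in> C" for i
    using sum_cap[OF that] lowered[OF that] small by simp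
  have core: "bary_region b \<in> lmeasurable"
    by (intro lmeasurable_compact bary_region_compact small)
  have caps: "bary_region (b(i := c i)) \<in> lmeasurable" if "i \<in> C" for i
    by (intro lmeasurable_compact bary_region_compact cap_small that)
  have core_measure: "measure lebesgue (bary_region b) = V * \<rho> ^ DIM('a)"
    using bary_region_measure[OF small] by (simp add: V_def \<rho>_def)
  have cap_measure: "measure lebesgue (bary_region (b(i := c i))) = V * (\<rho> + (b i - c i)) ^ DIM('a)"
    if "i \<in> C" for i
  proof -
    have "1 - sum (b(i := c i)) C = \<rho> + (b i - c i)" using sum_cap[OF that] by (simp add: \<rho>_def)
    then show ?thesis using bary_region_measure[OF cap_small[OF that]] by (simp add: V_def)
  qed
  have "measure lebesgue (\<Union>i\<in>C. bary_region (b(i := c i))) =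
        measure lebesgue (bary_region b) +
        (\<Sum>i\<in>C. measure lebesgue (bary_region (b(i := c i))) - measure lebesgue (bary_region b))"
  proof (rule measure_union_with_common_core[OF finite_frame _ core caps])
    show "C \<noteq> {}" using spanning_frame by auto
    show "bary_region b \<subseteq> bary_region (b(i := c i))" if "i \<in> C" for i
      using lowered[OF that] by (intro bary_region_antimono) auto
    show "bary_region (b(i := c i)) \<inter> bary_region (b(j := c j)) \<subseteq> bary_region b"
      if "i \<in> C" "j \<in> C" "i \<noteq> j" for i j
      using that unfolding bary_region_def by (auto split: if_splits)
  qed
  also have "\<dots> = V * \<rho> ^ DIM('a) + (\<Sum>i\<in>C. V * (\<rho> + (b i - c i)) ^ DIM('a) - V * \<rho> ^ DIM('a))"
    by (simp add: core_measure cap_measure cong: sum.cong)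
  finally show ?thesis
    by (simp add: V_def distrib_left sum_distrib_left right_diff_distrib)
qed

(* If K (compact) fits into no translate of the simplex, pick for each vertex v a point
   p v of K minimizing the v-th coordinate; these minima have negative sum. *)
lemma vertex_minimizers:
  assumes "compact K" "\<not> contains_translate (convex hull C) K"
  obtains p where "\<And>v. v \<in> C \<Longrightarrow> p v \<in> K" "(\<Sum>v\<in>C. bary (p v) v) < 0"
proof -
  have "K \<noteq> {}" using assms(2) by (auto simp: contains_translate_def)
  then have "\<forall>v\<in>C. \<exists>k\<in>K. \<forall>k'\<in>K. bary k v \<le> bary k' v"
    using continuous_attains_inf[OF assms(1)] continuous_on_bary by blast
  then obtain p where p: "\<And>v. v \<in> C \<Longrightarrow> p v \<in> K"
    and minimal: "\<And>v k. v \<in> C \<Longrightarrow> k \<in> K \<Longrightarrow> bary (p v) v \<le> bary k v"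
    by metis
  have "\<not> 0 \<le> (\<Sum>v\<in>C. bary (p v) v)"
    using contains_translate_by_bary_bounds[of K "\<lambda>v. bary (p v) v"] minimal assms(2) by blast
  then show thesis using that[OF p] by simp
qed

(* The homothets s p i + (1 - s) T jointly have volume at least vol T times the caps
   ratio: each contains the cap in which the i-th bound is lowered to s * bary (p i) i. *)
lemma measure_union_homothets:
  fixes p :: "'a \<Rightarrow> 'a" and s :: real
  defines "P \<equiv> sum (max_coord p) C"
  assumes "0 < s" "s * P < 1"
  shows "measure lebesgue (convex hull C) * caps_ratio C P (\<lambda>i. max_coord p i - bary (p i) i) DIM('a) s
         \<le> measure lebesgue (\<Union>i\<in>C. (\<lambda>y. s *\<^sub>R p i + (1 - s) *\<^sub>R y) ` (convex hull C))"
proof -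
  define b where "b v = s * max_coord p v" for v
  define c where "c i = s * bary (p i) i" for i
  have "1 \<le> P" unfolding P_def by (rule sum_max_coord_ge_one)
  then have "s \<le> s * P" using \<open>0 < s\<close> by simp
  then have "s < 1" using assms(3) by linarith
  have sum_b: "sum b C = s * P" by (simp add: b_def P_def sum_distrib_left)
  have lowered: "c i \<le> b i" if "i \<in> C" for i
    using max_coord_ge[OF that] \<open>0 < s\<close> by (simp add: b_def c_def)
  have cap_inside: "bary_region (b(i := c i)) \<subseteq> (\<lambda>y. s *\<^sub>R p i + (1 - s) *\<^sub>R y) ` (convex hull C)"
    if "i \<in> C" for i
    unfolding bary_region_homothety[OF less_imp_le[OF \<open>0 < s\<close>] \<open>s < 1\<close>, symmetric]
    using max_coord_ge[OF that] \<open>0 < s\<close> by (intro bary_region_antimono) (simp add: b_def c_def)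
  have "caps_ratio C P (\<lambda>i. max_coord p i - bary (p i) i) DIM('a) s
        = (1 - sum b C) ^ DIM('a) + (\<Sum>i\<in>C. (1 - sum b C + (b i - c i)) ^ DIM('a) - (1 - sum b C) ^ DIM('a))"
    unfolding sum_b by (simp add: caps_ratio_def b_def c_def right_diff_distrib)
  then have "measure lebesgue (convex hull C) * caps_ratio C P (\<lambda>i. max_coord p i - bary (p i) i) DIM('a) s
        = measure lebesgue (\<Union>i\<in>C. bary_region (b(i := c i)))"
    using measure_union_caps[of c b, OF lowered] sum_b assms(3) by simp
  also have "\<dots> \<le> measure lebesgue (\<Union>i\<in>C. (\<lambda>y. s *\<^sub>R p i + (1 - s) *\<^sub>R y) ` (convex hull C))"
    using cap_inside finite_frame bary_region_closed
    by (intro UN_mono order_refl measure_mono_fmeasurable lmeasurable_compact compact_UN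
        compact_continuous_image continuous_intros finite_imp_compact_convex_hull)
       (auto intro!: sets.finite_UN simp: borel_closed sets_completionI_sets)
  finally show ?thesis .
qed

lemma measure_mink_comb_exceeds:
  assumes "compact K" "\<not> contains_translate (convex hull C) K"
  shows "\<exists>\<delta>>0. \<forall>s. 0 < s \<and> s < \<delta> \<longrightarrow>
           measure lebesgue (convex hull C) < measure lebesgue (mink_comb s K (1 - s) (convex hull C))"
proof -
  obtain p where p: "\<And>v. v \<in> C \<Longrightarrow> p v \<in> K" and deficit: "(\<Sum>v\<in>C. bary (p v) v) < 0"
    using vertex_minimizers[OF assms] by blast
  define P where "P = sum (max_coord p) C"
  define d where "d i = max_coord p i - bary (p i) i" for i
  have P: "1 \<le> P" unfolding P_def by (rule sum_max_coord_ge_one)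
  have "P < sum d C" using deficit by (simp add: d_def P_def sum_subtractf)
  then obtain \<delta> where "\<delta> > 0" and ratio: "\<And>s. 0 < s \<Longrightarrow> s < \<delta> \<Longrightarrow> 1 < caps_ratio C P d DIM('a) s"
    using caps_ratio_exceeds_one[OF finite_frame DIM_positive] by blast
  have "measure lebesgue (convex hull C) < measure lebesgue (mink_comb s K (1 - s) (convex hull C))"
    if s: "0 < s" "s < min \<delta> (1 / P)" for s
  proof -
    have "s * P < 1" using s P by (simp add: field_simps)
    have "measure lebesgue (convex hull C) < measure lebesgue (convex hull C) * caps_ratio C P d DIM('a) s"
      using ratio s measure_convex_hull_pos by simp
    also have "\<dots> \<le> measure lebesgue (\<Union>i\<in>C. (\<lambda>y. s *\<^sub>R p i + (1 - s) *\<^sub>R y) ` (convex hull C))"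
      using measure_union_homothets[OF \<open>0 < s\<close>] \<open>s * P < 1\<close> by (simp add: P_def d_def[abs_def])
    also have "\<dots> \<le> measure lebesgue (mink_comb s K (1 - s) (convex hull C))"
      using p finite_frame
      by (intro measure_mono_fmeasurable lmeasurable_compact compact_mink_comb assms(1)
          finite_imp_compact_convex_hull fmeasurableD compact_UN compact_continuous_image continuous_intros)
         (auto simp: mink_comb_def intro: sets.finite_UN)
    finally show ?thesis .
  qed
  moreover have "0 < min \<delta> (1 / P)" using \<open>\<delta> > 0\<close> P by simp
  ultimately show ?thesis by blast
qed

end

lemma simplex_affine_frame:
  fixes T :: "'a::euclidean_space set"
  assumes "int DIM('a) simplex T"
  obtains C where "affine_frame C" "T = convex hull C"
proof -
  obtain C :: "'a set" where indep: "\<not> affine_dependent C" and card: "card C = DIM('a) + 1"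
    and T: "T = convex hull C"
    using assms unfolding simplex_def by force
  have "finite C" using card by (metis card.infinite add_is_0 one_neq_zero)
  moreover have "affine hull C = UNIV"
    using aff_dim_affine_independent[OF indep] card aff_dim_eq_full[of C] by simp
  ultimately show thesis using that indep T by (simp add: affine_frame_def)
qed

theorem theorem3p1:
  fixes T K :: "'a::euclidean_space set"
  assumes dim: "DIM('a) \<ge> 2"
    and simp: "int DIM('a) simplex T"
    and Kcomp: "compact K" and Kconv: "convex K"
    and proj: "\<forall>u. norm u = 1 \<longrightarrow> contains_translate (proj_perp u T) (proj_perp u K)"
    and notr: "\<not> contains_translate T K"
  shows "\<exists>t. 0 < t \<and> t < 1 \<and>
           (let L = mink_comb (1 - t) K t T in
              (\<forall>u. norm u = 1 \<longrightarrow> contains_translate (proj_perp u T) (proj_perp u L)) \<and>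
              measure lebesgue L > measure lebesgue T)"
proof -
  obtain C where frame: "affine_frame C" and T: "T = convex hull C"
    using simplex_affine_frame[OF simp] .
  obtain \<delta> where "\<delta> > 0" and grows: "\<And>s. 0 < s \<Longrightarrow> s < \<delta> \<Longrightarrow>
      measure lebesgue T < measure lebesgue (mink_comb s K (1 - s) T)"
    using affine_frame.measure_mink_comb_exceeds[OF frame Kcomp notr[unfolded T]] T by blast
  define t where "t = 1 - min (\<delta> / 2) (1 / 2)"
  have t: "0 < t" "t < 1" using \<open>\<delta> > 0\<close> by (auto simp: t_def)
  have projections: "contains_translate (proj_perp u T) (proj_perp u (mink_comb (1 - t) K t T))"
    if "norm u = 1" for u
    unfolding proj_perp_mink_comb
    using proj that t by (intro contains_translate_mink_comb convex_proj_perp) (auto simp: T)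
  have "measure lebesgue T < measure lebesgue (mink_comb (1 - t) K t T)"
    using grows[of "1 - t"] \<open>\<delta> > 0\<close> by (simp add: t_def)
  with t projections show ?thesis by (auto simp: Let_def)
qed

end
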